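(* Let $(Q,P)$ be a weakly quasi-lattice ordered group and let $\Lambda$ be a (not necessarily finitely aligned) $P$-graph with $\mathrm{FA}(\Lambda)\neq\emptyset$. For any $\mu\in\Lambda$ and finite $K\subseteq\mu\Lambda$, let $E=\mu\Lambda\setminus\bigcup_{\nu\in K}\nu\Lambda$. Then $\{x\in\mathcal{F}(\Lambda):\mu\in x,\ x\cap K=\emptyset\}=\hat E$, where $\hat E=\{x\in\mathcal{F}(\Lambda): x\cap\gamma\Lambda\subseteq E\text{ for some }\gamma\in x\}$.
   Context: $(Q,P)$ weakly quasi-lattice ordered: $Q$ a discrete group, $P\subseteq Q$ a subsemigroup containing the identity $e$ with $P\cap P^{-1}=\{e\}$, and, with $p\le r$ meaning $pq=r$ for some $q\in P$, any two elements of $P$ with a common upper bound have a least common upper bound. A $P$-graph is a countable small category $\Lambda$ (range/source $r,s$) with a functor $d:\Lambda\to P$ with unique factorisation (if $d(\lambda)=pq$ there are unique $\mu,\nu$ with $\lambda=\mu\nu$, $d(\mu)=p$, $d(\nu)=q$). Write $\lambda\Lambda=\{\lambda\mu: s(\lambda)=r(\mu)\}$, $\mu\preceq\lambda$ iff $\lambda\in\mu\Lambda$. $\mathrm{FA}(\Lambda)$ is the set of $\lambda$ such that for all $\mu\in\lambda\Lambda,\nu\in\Lambda$ there is finite $J\subseteq\Lambda$ with $\mu\Lambda\cap\nu\Lambda=\bigcup_{\kappa\in J}\kappa\Lambda$. A filter is a nonempty $x\subseteq\Lambda$ that is hereditary ($\lambda\preceq\mu\in x\Rightarrow\lambda\in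 x$) and directed ($\mu,\nu\in x$ implies some $\lambda\in x$ with $\mu,\nu\preceq\lambda$); $\mathcal{F}(\Lambda)$ is the set of filters. *)

theory Defs
  imports "HOL-Algebra.Group" "HOL-Library.Countable_Set"
begin

definition pord :: "('g, 'b) monoid_scheme \<Rightarrow> 'g set \<Rightarrow> 'g \<Rightarrow> 'g \<Rightarrow> bool" where
  "pord G P p r \<longleftrightarrow> (\<exists>q\<in>P. p \<otimes>\<^bsub>G\<^esub> q = r)"

definition wqlo :: "('g, 'b) monoid_scheme \<Rightarrow> 'g set \<Rightarrow> bool" where
  "wqlo G P \<longleftrightarrow> group G \<and> P \<subseteq> carrier G \<and> \<one>\<^bsub>G\<^esub> \<in> P
     \<and> (\<forall>p\<in>P. \<forall>q\<in>P. p \<otimes>\<^bsub>G\<^esub> q \<in> P)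
     \<and> P \<inter> (\<lambda>p. inv\<^bsub>G\<^esub> p) ` P = {\<one>\<^bsub>G\<^esub>}
     \<and> (\<forall>p\<in>P. \<forall>q\<in>P. (\<exists>u\<in>P. pord G P p u \<and> pord G P q u) \<longrightarrow>
          (\<exists>l\<in>P. pord G P p l \<and> pord G P q l \<and>
             (\<forall>u\<in>P. pord G P p u \<and> pord G P q u \<longrightarrow> pord G P l u)))"

text \<open>A small category: objects Obj, morphisms Mor, range rng, source src, identities idm,
  composition cmp (cmp l m is the composite l m, defined when src l = rng m), degree functor deg.\<close>

record ('o, 'm, 'g) pgraph =
  Obj :: "'o set"
  Mor :: "'m set"
  rng :: "'m \<Rightarrow> 'o"
  src :: "'m \<Rightarrow> 'o"
  idm :: "'o \<Rightarrow> 'm"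
  cmp :: "'m \<Rightarrow> 'm \<Rightarrow> 'm"
  deg :: "'m \<Rightarrow> 'g"

definition is_category :: "('o, 'm, 'g, 'z) pgraph_scheme \<Rightarrow> bool" where
  "is_category L \<longleftrightarrow>
     (\<forall>l\<in>Mor L. rng L l \<in> Obj L \<and> src L l \<in> Obj L)
   \<and> (\<forall>v\<in>Obj L. idm L v \<in> Mor L \<and> rng L (idm L v) = v \<and> src L (idm L v) = v)
   \<and> (\<forall>l\<in>Mor L. \<forall>m\<in>Mor L. src L l = rng L m \<longrightarrow>
        cmp L l m \<in> Mor L \<and> rng L (cmp L l m) = rng L l \<and> src L (cmp L l m) = src L m)
   \<and> (\<forall>l\<in>Mor L. cmp L (idm L (rng L l)) l = l \<and> cmp L l (idm L (src L l)) = l)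
   \<and> (\<forall>l\<in>Mor L. \<forall>m\<in>Mor L. \<forall>n\<in>Mor L. src L l = rng L m \<longrightarrow> src L m = rng L n \<longrightarrow>
        cmp L (cmp L l m) n = cmp L l (cmp L m n))"

definition is_Pgraph :: "('g, 'b) monoid_scheme \<Rightarrow> 'g set \<Rightarrow> ('o, 'm, 'g, 'z) pgraph_scheme \<Rightarrow> bool" where
  "is_Pgraph G P L \<longleftrightarrow> is_category L \<and> countable (Obj L) \<and> countable (Mor L)
   \<and> (\<forall>l\<in>Mor L. deg L l \<in> P)
   \<and> (\<forall>v\<in>Obj L. deg L (idm L v) = \<one>\<^bsub>G\<^esub>)
   \<and> (\<forall>l\<in>Mor L. \<forall>m\<in>Mor L. src L l = rng L m \<longrightarrow> deg L (cmp L l m) = deg L l \<otimes>\<^bsub>G\<^esub> deg L m)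
   \<and> (\<forall>l\<in>Mor L. \<forall>p\<in>P. \<forall>q\<in>P. deg L l = p \<otimes>\<^bsub>G\<^esub> q \<longrightarrow>
        (\<exists>!mn. fst mn \<in> Mor L \<and> snd mn \<in> Mor L \<and> src L (fst mn) = rng L (snd mn)
              \<and> l = cmp L (fst mn) (snd mn) \<and> deg L (fst mn) = p \<and> deg L (snd mn) = q))"

definition ext :: "('o, 'm, 'g, 'z) pgraph_scheme \<Rightarrow> 'm \<Rightarrow> 'm set" where
  "ext L l = {cmp L l m | m. m \<in> Mor L \<and> src L l = rng L m}"

definition prec :: "('o, 'm, 'g, 'z) pgraph_scheme \<Rightarrow> 'm \<Rightarrow> 'm \<Rightarrow> bool" where
  "prec L m l \<longleftrightarrow> l \<in> ext L m"

definition FA :: "('o, 'm, 'g, 'z) pgraph_scheme \<Rightarrow> 'm set" where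
  "FA L = {l \<in> Mor L. \<forall>m\<in>ext L l. \<forall>n\<in>Mor L.
      \<exists>J. finite J \<and> J \<subseteq> Mor L \<and> ext L m \<inter> ext L n = (\<Union>k\<in>J. ext L k)}"

definition is_filter :: "('o, 'm, 'g, 'z) pgraph_scheme \<Rightarrow> 'm set \<Rightarrow> bool" where
  "is_filter L x \<longleftrightarrow> x \<subseteq> Mor L \<and> x \<noteq> {}
   \<and> (\<forall>l\<in>Mor L. \<forall>m\<in>x. prec L l m \<longrightarrow> l \<in> x)
   \<and> (\<forall>m\<in>x. \<forall>n\<in>x. \<exists>l\<in>x. prec L m l \<and> prec L n l)"

definition filters :: "('o, 'm, 'g, 'z) pgraph_scheme \<Rightarrow> 'm set set" where
  "filters L = {x. is_filter L x}"

definition hat :: "('o, 'm, 'g, 'z) pgraph_scheme \<Rightarrow> 'm set \<Rightarrow> 'm set set" where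
  "hat L E = {x \<in> filters L. \<exists>g\<in>x. x \<inter> ext L g \<subseteq> E}"

end

theory Submission
  imports Defs
begin

text \<open>A filter containing \<mu> and missing K is in \<open>\<hat>E\<close> with
  witness \<gamma> = \<mu>: an element of \<open>x \<inter> \<mu>\<Lambda>\<close> lying in some \<open>\<nu>\<Lambda>\<close> with \<nu> \<in> K would put \<nu> into x
  by heredity. Conversely, if \<open>x \<inter> \<gamma>\<Lambda> \<subseteq> E\<close> then \<gamma> \<in> \<gamma>\<Lambda> gives \<gamma> \<in> \<mu>\<Lambda>, hence \<mu> \<in> x; and a common
  upper bound in x of \<gamma> and some \<nu> \<in> x \<inter> K would lie in \<open>x \<inter> \<gamma>\<Lambda>\<close> but outside E.\<close>

lemma ext_subset_Mor:
  assumes "is_category L" and "l \<in> Mor L"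
  shows "ext L l \<subseteq> Mor L"
  using assms unfolding is_category_def ext_def by auto

lemma mem_ext_self:
  assumes "is_category L" and "l \<in> Mor L"
  shows "l \<in> ext L l"
proof -
  have "idm L (src L l) \<in> Mor L" "rng L (idm L (src L l)) = src L l"
    "cmp L l (idm L (src L l)) = l"
    using assms unfolding is_category_def by auto
  then show ?thesis unfolding ext_def by force
qed

lemma filter_subset_Mor: "is_filter L x \<Longrightarrow> x \<subseteq> Mor L"
  by (simp add: is_filter_def)

lemma filter_hereditary:
  "\<lbrakk>is_filter L x; m \<in> x; l \<in> Mor L; m \<in> ext L l\<rbrakk> \<Longrightarrow> l \<in> x"
  unfolding is_filter_def prec_def by blast

lemma filter_directed:
  assumes "is_filter L x" and "m \<in> x" and "n \<in> x"
  obtains l where "l \<in> x" "l \<in> ext L m" "l \<in> ext L n"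
  using assms unfolding is_filter_def prec_def by blast

lemma filter_in_hat_ext_diff:
  assumes "is_filter L x" and "\<mu> \<in> x" and "K \<subseteq> Mor L" and "x \<inter> K = {}"
  shows "x \<in> hat L (ext L \<mu> - (\<Union>\<nu>\<in>K. ext L \<nu>))"
proof -
  have "x \<inter> ext L \<mu> \<subseteq> ext L \<mu> - (\<Union>\<nu>\<in>K. ext L \<nu>)"
  proof
    fix l assume l: "l \<in> x \<inter> ext L \<mu>"
    have "l \<notin> ext L \<nu>" if "\<nu> \<in> K" for \<nu>
    proof
      assume "l \<in> ext L \<nu>"
      then have "\<nu> \<in> x"
        using filter_hereditary[OF assms(1)] l that assms(3) by blast
      with that assms(4) show False by blast
    qed
    with l show "l \<in> ext L \<mu> - (\<Union>\<nu>\<in>K. ext L \<nu>)" by blast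
  qed
  then show ?thesis
    using assms(1,2) unfolding hat_def filters_def by blast
qed

lemma hat_ext_diff_imp_filter:
  assumes "is_category L" and "\<mu> \<in> Mor L"
    and "x \<in> hat L (ext L \<mu> - (\<Union>\<nu>\<in>K. ext L \<nu>))"
  shows "is_filter L x" and "\<mu> \<in> x" and "x \<inter> K = {}"
proof -
  obtain \<gamma> where x: "is_filter L x" and "\<gamma> \<in> x"
    and sub: "x \<inter> ext L \<gamma> \<subseteq> ext L \<mu> - (\<Union>\<nu>\<in>K. ext L \<nu>)"
    using assms(3) unfolding hat_def filters_def by blast
  have "\<gamma> \<in> ext L \<gamma>"
    using mem_ext_self[OF assms(1)] filter_subset_Mor[OF x] \<open>\<gamma> \<in> x\<close> by blast
  then have "\<gamma> \<in> ext L \<mu>"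
    using sub \<open>\<gamma> \<in> x\<close> by blast
  then show "\<mu> \<in> x"
    using filter_hereditary[OF x \<open>\<gamma> \<in> x\<close> assms(2)] by blast
  show "x \<inter> K = {}"
  proof (rule ccontr)
    assume "x \<inter> K \<noteq> {}"
    then obtain \<nu> where "\<nu> \<in> x" "\<nu> \<in> K" by blast
    then obtain l where "l \<in> x" "l \<in> ext L \<gamma>" "l \<in> ext L \<nu>"
      using filter_directed[OF x \<open>\<gamma> \<in> x\<close>] by blast
    then show False
      using sub \<open>\<nu> \<in> K\<close> by blast
  qed
  show "is_filter L x"
    by (fact x)
qed

theorem lemma6p4:
  fixes G :: "('g, 'b) monoid_scheme" and P :: "'g set"
    and L :: "('o, 'm, 'g, 'z) pgraph_scheme" and \<mu> :: 'm and K :: "'m set"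
  assumes "wqlo G P"
    and "is_Pgraph G P L"
    and "FA L \<noteq> {}"
    and "\<mu> \<in> Mor L"
    and "finite K" and "K \<subseteq> ext L \<mu>"
  shows "{x \<in> filters L. \<mu> \<in> x \<and> x \<inter> K = {}}
           = hat L (ext L \<mu> - (\<Union>\<nu>\<in>K. ext L \<nu>))"
proof -
  have cat: "is_category L"
    using assms(2) by (simp add: is_Pgraph_def)
  have "K \<subseteq> Mor L"
    using assms(6) ext_subset_Mor[OF cat assms(4)] by blast
  show ?thesis
  proof (rule subset_antisym; rule subsetI)
    fix x assume "x \<in> {x \<in> filters L. \<mu> \<in> x \<and> x \<inter> K = {}}"
    then show "x \<in> hat L (ext L \<mu> - (\<Union>\<nu>\<in>K. ext L \<nu>))"
      using filter_in_hat_ext_diff[OF _ _ \<open>K \<subseteq> Mor L\<close>] by (simp add: filters_def)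
  next
    fix x assume "x \<in> hat L (ext L \<mu> - (\<Union>\<nu>\<in>K. ext L \<nu>))"
    then show "x \<in> {x \<in> filters L. \<mu> \<in> x \<and> x \<inter> K = {}}"
      using hat_ext_diff_imp_filter[OF cat assms(4)] by (simp add: filters_def)
  qed
qed

end
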